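(* For every set of formulas $\Gamma$ and every formula $\alpha$: if $\Gamma\vDash_{\mathcal{M}_1^0}\alpha$ then $\Gamma\vdash_{L_1^0}\alpha$.
   Context: Formulas are built from a countable set of propositional variables using the unary connectives $\neg$ and $\circ$ and the binary connectives $\land,\lor,\to$. Write $\circ^0\alpha=\alpha$, $\circ^{m+1}\alpha=\circ(\circ^m\alpha)$. The Hilbert calculus mbC has as axiom schemas those of a standard axiomatization of positive classical propositional logic in $\land,\lor,\to$, plus (TND) $\alpha\lor\neg\alpha$ and (bc1) $\circ\alpha\to(\alpha\to(\neg\alpha\to\beta))$; its only rule is modus ponens. mbCciw is mbC plus (ciw) $\circ\alpha\lor(\alpha\land\neg\alpha)$. $L_1^0$ is mbCciw plus the schema $\circ\circ\circ\alpha$. $\Gamma\vdash_L\alpha$ means $\alpha$ is derivable from $\Gamma$ in $L$. Semantics: on $\{0,1\}$ use the Boolean operations $\land,\lor,\to,\sim$. Let $\mathbb{B}_1^0=\{x\in\{0,1\}^3: x_1\lor x_2=1,\ x_3\lor\sim(x_1\land x_2)=1\}$. The multialgebra $\mathcal{B}_1^0$ has $x\# y=\{z\in\mathbb{B}_1^0: z_1=x_1\# y_1\}$ for $\#\in\{\land,\lor,\to\}$, $\neg x=\{z\in\mathbb{B}_1^0: z_1=x_2\}$, $\circ x=\{(\sim(x_1\land x_2),x_3,x_3\land\sim(x_1\land x_2))\}$. $D_1^0=\{x: x_1=1\}$, $\mathcal{M}_1^0=(\mathcal{B}_1^0,D_1^0)$. A valuation over $\mathcal{M}_1^0$ is a map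 $h$ from formulas to $\mathbb{B}_1^0$ with $h(\alpha\#\beta)\in h(\alpha)\# h(\beta)$, $h(\neg\alpha)\in\neg h(\alpha)$, $h(\circ\alpha)\in\circ h(\alpha)$. $\Gamma\vDash_{\mathcal{M}_1^0}\alpha$ iff every valuation $h$ with $h[\Gamma]\subseteq D_1^0$ has $h(\alpha)\in D_1^0$. *)

theory Defs
  imports Main
begin

datatype fm =
    Var nat
  | Neg fm
  | Circ fm
  | And fm fm
  | Or fm fm
  | Imp fm fm

fun circ_pow :: "nat \<Rightarrow> fm \<Rightarrow> fm" where
  "circ_pow 0 a = a"
| "circ_pow (Suc m) a = Circ (circ_pow m a)"

text \<open>Axioms of positive classical propositional logic (the standard axiomatization
  used for mbC by Carnielli--Coniglio), plus TND, bc1, ciw and circ^3.\<close>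
inductive L10_axiom :: "fm \<Rightarrow> bool" where
  Ax1: "L10_axiom (Imp a (Imp b a))"
| Ax2: "L10_axiom (Imp (Imp a b) (Imp (Imp a (Imp b c)) (Imp a c)))"
| Ax3: "L10_axiom (Imp a (Imp b (And a b)))"
| Ax4: "L10_axiom (Imp (And a b) a)"
| Ax5: "L10_axiom (Imp (And a b) b)"
| Ax6: "L10_axiom (Imp a (Or a b))"
| Ax7: "L10_axiom (Imp b (Or a b))"
| Ax8: "L10_axiom (Imp (Imp a c) (Imp (Imp b c) (Imp (Or a b) c)))"
| Ax9: "L10_axiom (Or a (Imp a b))"
| TND: "L10_axiom (Or a (Neg a))"
| bc1: "L10_axiom (Imp (Circ a) (Imp a (Imp (Neg a) b)))"
| ciw: "L10_axiom (Or (Circ a) (And a (Neg a)))"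
| circ3: "L10_axiom (circ_pow 3 a)"

inductive L10_derivable :: "fm set \<Rightarrow> fm \<Rightarrow> bool" where
  premise: "a \<in> \<Gamma> \<Longrightarrow> L10_derivable \<Gamma> a"
| axiom: "L10_axiom a \<Longrightarrow> L10_derivable \<Gamma> a"
| MP: "L10_derivable \<Gamma> a \<Longrightarrow> L10_derivable \<Gamma> (Imp a b) \<Longrightarrow> L10_derivable \<Gamma> b"

text \<open>Elements of {0,1}^3 are triples (x1, x2, x3) of booleans (True = 1).\<close>
type_synonym tri = "bool \<times> bool \<times> bool"

definition in_B10 :: "tri \<Rightarrow> bool" where
  "in_B10 x \<longleftrightarrow> (case x of (x1, x2, x3) \<Rightarrow> (x1 \<or> x2) \<and> (x3 \<or> \<not> (x1 \<and> x2)))"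

definition B10 :: "tri set" where
  "B10 = {x. in_B10 x}"

definition p1 :: "tri \<Rightarrow> bool" where "p1 x = fst x"
definition p2 :: "tri \<Rightarrow> bool" where "p2 x = fst (snd x)"
definition p3 :: "tri \<Rightarrow> bool" where "p3 x = snd (snd x)"

definition mAnd :: "tri \<Rightarrow> tri \<Rightarrow> tri set" where
  "mAnd x y = {z \<in> B10. p1 z = (p1 x \<and> p1 y)}"
definition mOr :: "tri \<Rightarrow> tri \<Rightarrow> tri set" where
  "mOr x y = {z \<in> B10. p1 z = (p1 x \<or> p1 y)}"
definition mImp :: "tri \<Rightarrow> tri \<Rightarrow> tri set" where
  "mImp x y = {z \<in> B10. p1 z = (p1 x \<longrightarrow> p1 y)}"
definition mNeg :: "tri \<Rightarrow> tri set" where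
  "mNeg x = {z \<in> B10. p1 z = p2 x}"
definition mCirc :: "tri \<Rightarrow> tri set" where
  "mCirc x = {(\<not> (p1 x \<and> p2 x), p3 x, p3 x \<and> \<not> (p1 x \<and> p2 x))}"

definition D10 :: "tri set" where
  "D10 = {x \<in> B10. p1 x}"

definition valuation_M10 :: "(fm \<Rightarrow> tri) \<Rightarrow> bool" where
  "valuation_M10 h \<longleftrightarrow>
     (\<forall>a. h a \<in> B10) \<and>
     (\<forall>a b. h (And a b) \<in> mAnd (h a) (h b)) \<and>
     (\<forall>a b. h (Or a b) \<in> mOr (h a) (h b)) \<and>
     (\<forall>a b. h (Imp a b) \<in> mImp (h a) (h b)) \<and>
     (\<forall>a. h (Neg a) \<in> mNeg (h a)) \<and>
     (\<forall>a. h (Circ a) \<in> mCirc (h a))"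

definition consequence_M10 :: "fm set \<Rightarrow> fm \<Rightarrow> bool" where
  "consequence_M10 \<Gamma> a \<longleftrightarrow>
     (\<forall>h. valuation_M10 h \<longrightarrow> h ` \<Gamma> \<subseteq> D10 \<longrightarrow> h a \<in> D10)"

end

theory Submission
  imports Defs
begin

text \<open>Completeness by the canonical-model method. A non-derivable \<open>\<alpha>\<close> extends, by Zorn's
  lemma, to a set \<open>\<Delta>\<close> maximal among those not deriving \<open>\<alpha>\<close>; such a \<open>\<Delta>\<close> is closed under
  derivability and decides \<open>\<and>, \<or>, \<rightarrow>\<close> classically. The triple
  \<open>(\<beta> \<in> \<Delta>, \<not>\<beta> \<in> \<Delta>, \<not>\<circ>\<beta> \<in> \<Delta>)\<close> is then a valuation over \<open>\<M>\<^sub>1\<^sup>0\<close>: TND, bc1 and ciw give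
  the constraints of \<open>\<B>\<^sub>1\<^sup>0\<close> and the first two coordinates of \<open>\<circ>\<close>, and the axiom
  \<open>\<circ>\<circ>\<circ>\<beta>\<close> pins down the third coordinate \<open>\<not>\<circ>\<circ>\<beta> \<in> \<Delta>\<close>. It designates \<open>\<Gamma>\<close> but not \<open>\<alpha>\<close>.\<close>

lemma L10_derivable_mono: "L10_derivable \<Gamma> a \<Longrightarrow> \<Gamma> \<subseteq> \<Delta> \<Longrightarrow> L10_derivable \<Delta> a"
  by (induction rule: L10_derivable.induct) (auto intro: L10_derivable.intros)

lemma L10_derivable_finite_premises:
  "L10_derivable \<Gamma> a \<Longrightarrow> \<exists>\<Gamma>\<^sub>0 \<subseteq> \<Gamma>. finite \<Gamma>\<^sub>0 \<and> L10_derivable \<Gamma>\<^sub>0 a"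
proof (induction rule: L10_derivable.induct)
  case (premise a \<Gamma>)
  then show ?case by (intro exI[of _ "{a}"]) (auto intro: L10_derivable.premise)
next
  case (axiom a \<Gamma>)
  then show ?case by (intro exI[of _ "{}"]) (auto intro: L10_derivable.axiom)
next
  case (MP \<Gamma> a b)
  then obtain \<Gamma>\<^sub>1 \<Gamma>\<^sub>2 where "\<Gamma>\<^sub>1 \<subseteq> \<Gamma>" "finite \<Gamma>\<^sub>1" "L10_derivable \<Gamma>\<^sub>1 a"
    and "\<Gamma>\<^sub>2 \<subseteq> \<Gamma>" "finite \<Gamma>\<^sub>2" "L10_derivable \<Gamma>\<^sub>2 (Imp a b)"
    by blast
  then show ?case
    by (intro exI[of _ "\<Gamma>\<^sub>1 \<union> \<Gamma>\<^sub>2"])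
      (auto intro: L10_derivable.MP L10_derivable_mono)
qed

lemma L10_derivable_Imp_refl: "L10_derivable \<Gamma> (Imp a a)"
proof -
  have "L10_derivable \<Gamma> (Imp (Imp a (Imp a a)) (Imp (Imp a (Imp (Imp a a) a)) (Imp a a)))"
    and "L10_derivable \<Gamma> (Imp a (Imp a a))"
    and "L10_derivable \<Gamma> (Imp a (Imp (Imp a a) a))"
    by (intro L10_derivable.axiom L10_axiom.intros)+
  then show ?thesis by (meson L10_derivable.MP)
qed

lemma L10_deduction:
  assumes "L10_derivable (insert a \<Gamma>) b"
  shows "L10_derivable \<Gamma> (Imp a b)"
  using assms
proof (induction "insert a \<Gamma>" b rule: L10_derivable.induct)
  case (premise c)
  then consider "c = a" | "c \<in> \<Gamma>" by blast
  then show ?case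
  proof cases
    case 1
    then show ?thesis by (simp add: L10_derivable_Imp_refl)
  next
    case 2
    then show ?thesis
      by (meson L10_derivable.MP L10_derivable.premise L10_derivable.axiom L10_axiom.Ax1)
  qed
next
  case (axiom c)
  then show ?case by (meson L10_derivable.MP L10_derivable.axiom L10_axiom.Ax1)
next
  case (MP c d)
  have "L10_derivable \<Gamma> (Imp (Imp a c) (Imp (Imp a (Imp c d)) (Imp a d)))"
    by (intro L10_derivable.axiom L10_axiom.Ax2)
  then show ?case using MP L10_derivable.MP by blast
qed

locale maximal_nonderiving =
  fixes \<Delta> :: "fm set" and \<alpha> :: fm
  assumes not_derivable: "\<not> L10_derivable \<Delta> \<alpha>"
    and derivable_if_extended: "\<And>\<Delta>'. \<Delta> \<subset> \<Delta>' \<Longrightarrow> L10_derivable \<Delta>' \<alpha>"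

lemma lindenbaum:
  assumes "\<not> L10_derivable \<Gamma> \<alpha>"
  obtains \<Delta> where "\<Gamma> \<subseteq> \<Delta>" and "maximal_nonderiving \<Delta> \<alpha>"
proof -
  let ?A = "{\<Delta>. \<Gamma> \<subseteq> \<Delta> \<and> \<not> L10_derivable \<Delta> \<alpha>}"
  have "\<exists>M\<in>?A. \<forall>X\<in>?A. M \<subseteq> X \<longrightarrow> X = M"
  proof (rule subset_Zorn_nonempty)
    show "?A \<noteq> {}" using assms by blast
  next
    fix C assume "C \<noteq> {}" and chain: "subset.chain ?A C"
    then obtain X where "X \<in> C" by blast
    then have "\<Gamma> \<subseteq> \<Union>C" using chain by (auto simp: subset_chain_def)
    moreover have "\<not> L10_derivable (\<Union>C) \<alpha>"
    proof
      assume "L10_derivable (\<Union>C) \<alpha>"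
      then obtain \<Gamma>\<^sub>0 where "\<Gamma>\<^sub>0 \<subseteq> \<Union>C" "finite \<Gamma>\<^sub>0" "L10_derivable \<Gamma>\<^sub>0 \<alpha>"
        using L10_derivable_finite_premises by blast
      moreover obtain Y where "Y \<in> C" "\<Gamma>\<^sub>0 \<subseteq> Y"
        using finite_subset_Union_chain[OF \<open>finite \<Gamma>\<^sub>0\<close> \<open>\<Gamma>\<^sub>0 \<subseteq> \<Union>C\<close> \<open>C \<noteq> {}\<close> chain] .
      ultimately show False
        using chain L10_derivable_mono by (auto simp: subset_chain_def)
    qed
    ultimately show "\<Union>C \<in> ?A" by blast
  qed
  then obtain \<Delta> where "\<Delta> \<in> ?A" and "\<forall>X\<in>?A. \<Delta> \<subseteq> X \<longrightarrow> X = \<Delta>" by blast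
  then have "\<Gamma> \<subseteq> \<Delta>" and "maximal_nonderiving \<Delta> \<alpha>"
    by (auto intro!: maximal_nonderiving.intro)
  then show thesis by (rule that)
qed

context maximal_nonderiving
begin

lemma derivable_Imp_alpha_if_not_mem: "b \<notin> \<Delta> \<Longrightarrow> L10_derivable \<Delta> (Imp b \<alpha>)"
  using derivable_if_extended[of "insert b \<Delta>"] by (auto intro: L10_deduction)

lemma derivable_imp_mem: "L10_derivable \<Delta> b \<Longrightarrow> b \<in> \<Delta>"
  using derivable_Imp_alpha_if_not_mem L10_derivable.MP not_derivable by blast

lemma axiom_mem: "L10_axiom b \<Longrightarrow> b \<in> \<Delta>"
  by (intro derivable_imp_mem L10_derivable.axiom)

lemma MP_mem: "a \<in> \<Delta> \<Longrightarrow> Imp a b \<in> \<Delta> \<Longrightarrow> b \<in> \<Delta>"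
  by (meson derivable_imp_mem L10_derivable.MP L10_derivable.premise)

lemma alpha_not_mem: "\<alpha> \<notin> \<Delta>"
  using not_derivable L10_derivable.premise by blast

lemma Or_mem_iff: "Or a b \<in> \<Delta> \<longleftrightarrow> a \<in> \<Delta> \<or> b \<in> \<Delta>"
proof
  assume "Or a b \<in> \<Delta>"
  show "a \<in> \<Delta> \<or> b \<in> \<Delta>"
  proof (rule ccontr)
    assume "\<not> (a \<in> \<Delta> \<or> b \<in> \<Delta>)"
    then have "Imp a \<alpha> \<in> \<Delta>" and "Imp b \<alpha> \<in> \<Delta>"
      by (simp_all add: derivable_Imp_alpha_if_not_mem derivable_imp_mem)
    moreover have "Imp (Imp a \<alpha>) (Imp (Imp b \<alpha>) (Imp (Or a b) \<alpha>)) \<in> \<Delta>"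
      by (intro axiom_mem L10_axiom.Ax8)
    ultimately show False
      using \<open>Or a b \<in> \<Delta>\<close> MP_mem alpha_not_mem by blast
  qed
next
  assume "a \<in> \<Delta> \<or> b \<in> \<Delta>"
  then show "Or a b \<in> \<Delta>"
    using MP_mem axiom_mem L10_axiom.Ax6 L10_axiom.Ax7 by blast
qed

lemma And_mem_iff: "And a b \<in> \<Delta> \<longleftrightarrow> a \<in> \<Delta> \<and> b \<in> \<Delta>"
  using MP_mem axiom_mem L10_axiom.Ax3 L10_axiom.Ax4 L10_axiom.Ax5 by meson

lemma Imp_mem_iff: "Imp a b \<in> \<Delta> \<longleftrightarrow> (a \<in> \<Delta> \<longrightarrow> b \<in> \<Delta>)"
  using MP_mem axiom_mem L10_axiom.Ax1 L10_axiom.Ax9 Or_mem_iff by meson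

lemma mem_or_Neg_mem: "a \<in> \<Delta> \<or> Neg a \<in> \<Delta>"
  using axiom_mem L10_axiom.TND Or_mem_iff by blast

lemma Circ_mem_iff: "Circ a \<in> \<Delta> \<longleftrightarrow> \<not> (a \<in> \<Delta> \<and> Neg a \<in> \<Delta>)"
proof -
  have "Circ a \<in> \<Delta> \<or> (a \<in> \<Delta> \<and> Neg a \<in> \<Delta>)"
    using axiom_mem[OF L10_axiom.ciw] Or_mem_iff And_mem_iff by blast
  moreover have "Imp (Circ a) (Imp a (Imp (Neg a) \<alpha>)) \<in> \<Delta>"
    by (intro axiom_mem L10_axiom.bc1)
  ultimately show ?thesis using MP_mem alpha_not_mem by blast
qed

lemma Neg_Circ_Circ_mem_iff: "Neg (Circ (Circ a)) \<in> \<Delta> \<longleftrightarrow> Circ a \<in> \<Delta> \<and> Neg (Circ a) \<in> \<Delta>"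
proof -
  have "Circ (Circ (Circ a)) \<in> \<Delta>"
    using axiom_mem[OF L10_axiom.circ3[of a]] by (simp add: numeral_3_eq_3)
  then show ?thesis
    using Circ_mem_iff[of "Circ a"] Circ_mem_iff[of "Circ (Circ a)"]
      mem_or_Neg_mem[of "Circ (Circ a)"]
    by blast
qed

definition canonical_val :: "fm \<Rightarrow> tri" where
  "canonical_val b = (b \<in> \<Delta>, Neg b \<in> \<Delta>, Neg (Circ b) \<in> \<Delta>)"

lemma canonical_val_in_B10: "canonical_val b \<in> B10"
  using mem_or_Neg_mem[of b] mem_or_Neg_mem[of "Circ b"] Circ_mem_iff[of b]
  by (auto simp: canonical_val_def B10_def in_B10_def)

lemma canonical_val_D10_iff: "canonical_val b \<in> D10 \<longleftrightarrow> b \<in> \<Delta>"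
  using canonical_val_in_B10 by (simp add: D10_def canonical_val_def p1_def)

lemma canonical_val_p1: "p1 (canonical_val b) \<longleftrightarrow> b \<in> \<Delta>"
  by (simp add: canonical_val_def p1_def)

lemma valuation_canonical_val: "valuation_M10 canonical_val"
  unfolding valuation_M10_def
proof (intro conjI allI)
  fix a b
  show "canonical_val a \<in> B10" by (rule canonical_val_in_B10)
  show "canonical_val (And a b) \<in> mAnd (canonical_val a) (canonical_val b)"
    using canonical_val_in_B10 by (simp add: mAnd_def canonical_val_p1 And_mem_iff)
  show "canonical_val (Or a b) \<in> mOr (canonical_val a) (canonical_val b)"
    using canonical_val_in_B10 by (simp add: mOr_def canonical_val_p1 Or_mem_iff)
  show "canonical_val (Imp a b) \<in> mImp (canonical_val a) (canonical_val b)"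
    using canonical_val_in_B10 by (simp add: mImp_def canonical_val_p1 Imp_mem_iff)
  show "canonical_val (Neg a) \<in> mNeg (canonical_val a)"
    using canonical_val_in_B10 by (simp add: mNeg_def canonical_val_p1)
      (simp add: canonical_val_def p2_def)
  show "canonical_val (Circ a) \<in> mCirc (canonical_val a)"
    using Circ_mem_iff[of a] Neg_Circ_Circ_mem_iff[of a]
    by (auto simp: mCirc_def canonical_val_def p1_def p2_def p3_def)
qed

end

theorem theorem6:
  fixes \<Gamma> :: "fm set" and \<alpha> :: fm
  assumes "consequence_M10 \<Gamma> \<alpha>"
  shows "L10_derivable \<Gamma> \<alpha>"
proof (rule ccontr)
  assume "\<not> L10_derivable \<Gamma> \<alpha>"
  then obtain \<Delta> where "\<Gamma> \<subseteq> \<Delta>" and "maximal_nonderiving \<Delta> \<alpha>"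
    by (rule lindenbaum)
  then interpret maximal_nonderiving \<Delta> \<alpha> by simp
  have "canonical_val ` \<Gamma> \<subseteq> D10"
    using \<open>\<Gamma> \<subseteq> \<Delta>\<close> canonical_val_D10_iff by blast
  then have "canonical_val \<alpha> \<in> D10"
    using assms valuation_canonical_val unfolding consequence_M10_def by blast
  then show False
    using canonical_val_D10_iff alpha_not_mem by blast
qed

end
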